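(* Let $W$ be a unitary $2\times2$ matrix with $\det W=1$ and $\operatorname{tr}W\ge 0$. Then for all unit scalars $\lambda\in\mathbb C$, $\|I-W\|\le\|I-\lambda W\|$.
   Context: $\|\cdot\|$ denotes the operator norm: $\|U\|=\sup\{\|Uv\| : v\in\mathbb C^2,\ \|v\|=1\}$. (For such $W$, $\operatorname{tr}W$ is real.) *)

theory Defs
  imports "HOL-Analysis.Analysis"
begin

definition cadjoint :: "complex^'n^'n \<Rightarrow> complex^'n^'n" where
  "cadjoint A = (\<chi> i j. cnj (A $ j $ i))"

definition unitary_mat :: "complex^'n^'n \<Rightarrow> bool" where
  "unitary_mat U \<longleftrightarrow> cadjoint U ** U = mat 1"

definition opnorm :: "complex^'n^'n \<Rightarrow> real" where
  "opnorm U = Sup {norm (U *v v) | v. norm v = 1}"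

end

theory Submission
  imports Defs
begin

text \<open>
  A unitary W with det W = 1 has the form [[a, -cnj b], [b, cnj a]] with |a|^2 + |b|^2 = 1,
  and so does I - W, with a, b replaced by 1 - a, -b. Matrices of this quaternionic shape are
  multiples of isometries, hence the norm of I - W is the length of its first column,
  which squares to 2 - 2 Re a. On the other hand the two columns of I - \<lambda>W have squared
  lengths 2 - 2 Re (\<lambda>a) and 2 - 2 Re (\<lambda> cnj a), which sum to 4 - 4 Re \<lambda> Re a; since
  Re a \<ge> 0 and Re \<lambda> \<le> 1, one of them is at least 2 - 2 Re a.
\<close>

definition quat_mat :: "complex \<Rightarrow> complex \<Rightarrow> complex^2^2" where
  "quat_mat p q = (\<chi> i j. if i = 1 then (if j = 1 then p else - cnj q)
                           else (if j = 1 then q else cnj p))"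

lemma quat_mat_nth [simp]:
  "quat_mat p q $ 1 $ 1 = p" "quat_mat p q $ 2 $ 1 = q"
  "quat_mat p q $ 1 $ 2 = - cnj q" "quat_mat p q $ 2 $ 2 = cnj p"
  by (simp_all add: quat_mat_def)

lemma mat_eq_iff_2: "A = B \<longleftrightarrow> (\<forall>i j. A $ i $ j = B $ i $ j)" for A B :: "'a^2^2"
  by (simp add: vec_eq_iff)

lemma mat_one_minus_quat_mat: "mat 1 - quat_mat a b = quat_mat (1 - a) (- b)"
  by (simp add: mat_eq_iff_2 forall_2 mat_def)

lemma norm_power2_vec2: "(norm v)^2 = (cmod (v$1))^2 + (cmod (v$2))^2" for v :: "complex^2"
  by (simp add: norm_vec_def L2_set_def sum_2)

lemma norm_quat_mat_mult_power2:
  "(norm (quat_mat p q *v v))^2 = ((cmod p)^2 + (cmod q)^2) * (norm v)^2"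
  unfolding norm_power2_vec2 cmod_power2
  by (simp add: matrix_vector_mult_def sum_2 power2_eq_square algebra_simps)

lemma unitary_det_one_eq_quat_mat:
  fixes W :: "complex^2^2"
  assumes "unitary_mat W" and "det W = 1"
  shows "W = quat_mat (W$1$1) (W$2$1)" and "(cmod (W$1$1))^2 + (cmod (W$2$1))^2 = 1"
proof -
  define a b c d where "a = W$1$1" "b = W$2$1" "c = W$1$2" "d = W$2$2"
  have U: "cadjoint W ** W = mat 1"
    using assms(1) unfolding unitary_mat_def .
  have col1: "cnj a * a + cnj b * b = 1"
    using arg_cong[OF U, of "\<lambda>M. M$1$1"]
    by (simp add: cadjoint_def matrix_matrix_mult_def sum_2 mat_def a_b_c_d_def)
  have orth: "cnj a * c + cnj b * d = 0"
    using arg_cong[OF U, of "\<lambda>M. M$1$2"]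
    by (simp add: cadjoint_def matrix_matrix_mult_def sum_2 mat_def a_b_c_d_def)
  have det: "a * d - c * b = 1"
    using assms(2) by (simp add: det_2 a_b_c_d_def)
  have "d - cnj a = cnj a * (a * d - c * b - 1) + b * (cnj a * c + cnj b * d)
                    - d * (cnj a * a + cnj b * b - 1)"
    by (simp add: algebra_simps)
  then have d: "d = cnj a"
    using col1 orth det by simp
  have "c + cnj b = a * (cnj a * c + cnj b * d) - cnj b * (a * d - c * b - 1)
                    - c * (cnj a * a + cnj b * b - 1)"
    by (simp add: algebra_simps)
  then have c: "c = - cnj b"
    using col1 orth det by (simp add: eq_neg_iff_add_eq_0)
  show "W = quat_mat (W$1$1) (W$2$1)"
    using c d by (simp add: mat_eq_iff_2 forall_2 a_b_c_d_def)
  have "complex_of_real ((cmod a)^2 + (cmod b)^2) = 1"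
    using col1 by (simp add: complex_norm_square[symmetric] mult.commute)
  then show "(cmod (W$1$1))^2 + (cmod (W$2$1))^2 = 1"
    unfolding a_b_c_d_def by (metis of_real_eq_1_iff)
qed

lemma bdd_above_opnorm_set: "bdd_above {norm (A *v v) |v. norm v = 1}"
  for A :: "complex^'n^'n"
proof -
  obtain K where K: "\<And>x. norm (A *v x) \<le> norm x * K"
    using bounded_linear.bounded[OF matrix_vector_mul_bounded_linear] by blast
  show ?thesis
  proof (rule bdd_aboveI)
    fix y assume "y \<in> {norm (A *v v) |v. norm v = 1}"
    then obtain v where "norm v = 1" "y = norm (A *v v)"
      by blast
    then show "y \<le> K"
      using K[of v] by simp
  qed
qed

lemma norm_mult_le_opnorm: "norm v = 1 \<Longrightarrow> norm (A *v v) \<le> opnorm A"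
  for A :: "complex^'n^'n"
  unfolding opnorm_def by (rule cSup_upper[OF _ bdd_above_opnorm_set]) auto

lemma opnorm_nonneg: "0 \<le> opnorm A"
  for A :: "complex^'n^'n"
  using norm_mult_le_opnorm[of "axis undefined 1" A] by (simp add: order_trans[OF norm_ge_zero])

lemma opnorm_least:
  fixes A :: "complex^'n^'n"
  assumes "\<And>v. norm v = 1 \<Longrightarrow> norm (A *v v) \<le> r"
  shows "opnorm A \<le> r"
proof -
  have "norm (axis undefined 1 :: complex^'n) = 1"
    by simp
  then show ?thesis
    unfolding opnorm_def by (intro cSup_least) (use assms in blast)+
qed

lemma opnorm_quat_mat_power2_le: "(opnorm (quat_mat p q))^2 \<le> (cmod p)^2 + (cmod q)^2"
proof -
  have "opnorm (quat_mat p q) \<le> sqrt ((cmod p)^2 + (cmod q)^2)"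
    by (rule opnorm_least, rule real_le_rsqrt) (simp add: norm_quat_mat_mult_power2)
  then show ?thesis
    using power_mono[OF _ opnorm_nonneg, of _ _ 2] by fastforce
qed

lemma cmod_one_minus_unit_mult_power2:
  fixes l a b :: complex
  assumes "cmod l = 1" and "(cmod a)^2 + (cmod b)^2 = 1"
  shows "(cmod (1 - l * a))^2 + (cmod (l * b))^2 = 2 - 2 * Re (l * a)"
proof -
  have "cmod (l * a) = cmod a"
    using assms(1) by (simp add: norm_mult)
  then have "Re (l * a)^2 + Im (l * a)^2 = (cmod a)^2"
    by (simp only: cmod_power2[symmetric])
  then have "(cmod (1 - l * a))^2 = 1 - 2 * Re (l * a) + (cmod a)^2"
    unfolding cmod_power2 by (simp add: power2_eq_square algebra_simps)
  then show ?thesis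
    using assms by (simp add: norm_mult)
qed

lemma norm_columns_id_minus_scaled_quat_mat:
  fixes l a b :: complex
  defines "A \<equiv> mat 1 - mat l ** quat_mat a b"
  assumes "cmod l = 1" and "(cmod a)^2 + (cmod b)^2 = 1"
  shows "(norm (A *v axis 1 1))^2 + (norm (A *v axis 2 1))^2 = 4 - 4 * Re l * Re a"
proof -
  have "(norm (A *v axis 1 1))^2 = (cmod (1 - l * a))^2 + (cmod (l * b))^2"
    "(norm (A *v axis 2 1))^2 = (cmod (1 - l * cnj a))^2 + (cmod (l * cnj b))^2"
    unfolding A_def norm_power2_vec2
    by (simp_all add: matrix_vector_mult_def matrix_matrix_mult_def sum_2 mat_def axis_def
        norm_mult)
  moreover have "(cmod (cnj a))^2 + (cmod (cnj b))^2 = 1"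
    using assms(3) by simp
  ultimately show ?thesis
    using cmod_one_minus_unit_mult_power2[OF assms(2)] assms(3) by simp
qed

theorem lemma7p17:
  fixes W :: "complex^2^2" and lam :: complex
  assumes "unitary_mat W"
    and "det W = 1"
    and "Re (trace W) \<ge> 0"
    and "norm lam = 1"
  shows "opnorm (mat 1 - W) \<le> opnorm (mat 1 - mat lam ** W)"
proof -
  define a b where "a = W$1$1" "b = W$2$1"
  define A where "A = mat 1 - mat lam ** W"
  have W: "W = quat_mat a b" and ab: "(cmod a)^2 + (cmod b)^2 = 1"
    using unitary_det_one_eq_quat_mat[OF assms(1,2)] by (simp_all add: a_b_def)
  have "Re a \<ge> 0"
    using assms(3) by (simp add: W trace_def sum_2)
  moreover have "Re lam \<le> 1"
    using assms(4) complex_Re_le_cmod[of lam] by simp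
  ultimately have "Re lam * Re a \<le> Re a"
    using mult_right_mono[of "Re lam" 1 "Re a"] by simp
  have "(opnorm (mat 1 - W))^2 \<le> (cmod (1 - a))^2 + (cmod b)^2"
    using opnorm_quat_mat_power2_le[of "1 - a" "- b"] by (simp add: W mat_one_minus_quat_mat)
  also have "\<dots> = 2 - 2 * Re a"
    using cmod_one_minus_unit_mult_power2[of 1 a b] ab by simp
  also have "\<dots> \<le> (opnorm A)^2"
  proof -
    have columns: "(norm (A *v axis 1 1))^2 + (norm (A *v axis 2 1))^2 = 4 - 4 * Re lam * Re a"
      unfolding A_def W by (rule norm_columns_id_minus_scaled_quat_mat[OF assms(4) ab])
    have column_le: "(norm (A *v axis k 1))^2 \<le> (opnorm A)^2" for k
      by (rule power_mono) (simp_all add: norm_mult_le_opnorm)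
    show ?thesis
      using columns column_le[of 1] column_le[of 2] \<open>Re lam * Re a \<le> Re a\<close> by linarith
  qed
  finally show ?thesis
    unfolding A_def by (rule power2_le_imp_le[OF _ opnorm_nonneg])
qed

end
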